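(* Let $M,N$ be integers, let $m_0$ be a trigonometric polynomial with $m_0(0)=1$, let $C\in\mathbb{R}$, and let $$\widehat\phi(\xi)=C\prod_{j=0}^{\infty}m_0\Big(\frac{\xi}{p^{N-j}}\Big),\qquad \xi\in\mathbb{Q}_p .$$ If $\operatorname{supp}\widehat\phi\subset B_M(0)$, then there exist at most $\frac{\deg m_0}{p-1}$ integers $n$ such that $0\le n<p^{M+N}$ and $\widehat\phi\big(\frac{n}{p^M}\big)\ne0$.
   Context: $p$ is a prime, $\mathbb{Q}_p$ the field of $p$-adic numbers with norm $|\cdot|_p$; $B_M(0)=\{\xi:|\xi|_p\le p^M\}$. The fractional part of $x=p^{\gamma}\sum_{j\ge0}x_jp^j$ ($x_j\in\{0,\dots,p-1\}$, $x_0\ne0$) is $\{x\}_p=p^{\gamma}\sum_{j=0}^{-\gamma-1}x_jp^j$, $\{0\}_p=0$, and $\chi_p(x)=e^{2\pi i\{x\}_p}$. A trigonometric polynomial is a function $m(\xi)=\sum_{k=0}^{K}c_k\chi_p(k\xi)$ with $c_k\in\mathbb{C}$; its degree $\deg m$ is the largest $k$ with $c_k\ne0$. *)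

theory Defs
  imports "HOL-Analysis.Analysis" "HOL-Computational_Algebra.Primes"
begin

text \<open>p-adic numbers are represented by their digit sequences:
  x = sum over j of d j * p^j, with digits d j in {0..p-1} and d j = 0 for all
  sufficiently negative j.\<close>

definition Qp :: "nat \<Rightarrow> (int \<Rightarrow> nat) set" where
  "Qp p = {d. (\<forall>j. d j < p) \<and> (\<exists>g. \<forall>j<g. d j = 0)}"

definition padic_trunc :: "nat \<Rightarrow> (int \<Rightarrow> nat) \<Rightarrow> int \<Rightarrow> real" where
  "padic_trunc p d n = (\<Sum>j\<in>{j. j < n \<and> d j \<noteq> 0}. real (d j) * real p powi j)"

definition padic_frac :: "nat \<Rightarrow> (int \<Rightarrow> nat) \<Rightarrow> real" where
  "padic_frac p d = padic_trunc p d 0"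

definition padic_chi :: "nat \<Rightarrow> (int \<Rightarrow> nat) \<Rightarrow> complex" where
  "padic_chi p d = exp (2 * pi * \<i> * complex_of_real (padic_frac p d))"

definition padic_val :: "(int \<Rightarrow> nat) \<Rightarrow> int" where
  "padic_val d = (THE v. d v \<noteq> 0 \<and> (\<forall>j<v. d j = 0))"

definition padic_norm :: "nat \<Rightarrow> (int \<Rightarrow> nat) \<Rightarrow> real" where
  "padic_norm p d = (if (\<forall>j. d j = 0) then 0 else real p powi (- padic_val d))"

text \<open>Multiplication by p^e (e an integer): shift of digits.\<close>
definition padic_pshift :: "int \<Rightarrow> (int \<Rightarrow> nat) \<Rightarrow> (int \<Rightarrow> nat)" where
  "padic_pshift e d = (\<lambda>j. d (j - e))"

text \<open>Multiplication by a natural number k: the truncation of k*x below p^(j+1) is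
  (k * trunc x (j+1)) mod p^(j+1); digit j is obtained from it.\<close>
definition rmod :: "real \<Rightarrow> real \<Rightarrow> real" where
  "rmod a b = a - b * of_int \<lfloor>a / b\<rfloor>"

definition padic_smult :: "nat \<Rightarrow> nat \<Rightarrow> (int \<Rightarrow> nat) \<Rightarrow> (int \<Rightarrow> nat)" where
  "padic_smult p k d = (\<lambda>j. nat \<lfloor>rmod (real k * padic_trunc p d (j + 1)) (real p powi (j + 1))
                                / real p powi j\<rfloor>)"

definition padic_of_nat :: "nat \<Rightarrow> nat \<Rightarrow> (int \<Rightarrow> nat)" where
  "padic_of_nat p n = (\<lambda>j. if j < 0 then 0 else (n div p ^ nat j) mod p)"

definition trig_poly :: "nat \<Rightarrow> nat \<Rightarrow> (nat \<Rightarrow> complex) \<Rightarrow> (int \<Rightarrow> nat) \<Rightarrow> complex" where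
  "trig_poly p K c xi = (\<Sum>k\<le>K. c k * padic_chi p (padic_smult p k xi))"

definition trig_deg :: "nat \<Rightarrow> (nat \<Rightarrow> complex) \<Rightarrow> nat" where
  "trig_deg K c = Max {k. k \<le> K \<and> c k \<noteq> 0}"

text \<open>phi-hat(xi) = C * prod_{j>=0} m0(xi / p^(N-j)) = C * prod m0(p^(j-N) xi).\<close>
definition phi_hat :: "nat \<Rightarrow> nat \<Rightarrow> (nat \<Rightarrow> complex) \<Rightarrow> real \<Rightarrow> int \<Rightarrow> (int \<Rightarrow> nat) \<Rightarrow> complex" where
  "phi_hat p K c C N xi =
     complex_of_real C * (\<Prod>j. trig_poly p K c (padic_pshift (int j - N) xi))"

end

theory Submission
  imports Defs "HOL-Computational_Algebra.Polynomial"
begin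

text \<open>At a point \<open>a / p^e\<close> the infinite product defining \<open>\<phi>\<close> is a finite product of values of
  the 1-periodic function \<open>g(y) = \<Sum>_k c_k exp(2\<pi>i k y)\<close>.  For \<open>n > 0\<close> the function
  \<open>G(a) = \<Prod>_{j<n} g(a p^(j-n))\<close>, for which \<open>\<phi>(a / p^(n-N)) = C G(a)\<close>, satisfies
  \<open>G(a) = g(a / p^n) G(p a mod p^n)\<close> on \<open>{0..<p^n}\<close>.
  Taking \<open>n > M + N\<close>, the support hypothesis forces \<open>p | a\<close> whenever \<open>G(a) \<noteq> 0\<close>.  Then each
  \<open>a\<close> in the support \<open>Z\<close> of \<open>G\<close> has \<open>p\<close> preimages under \<open>z \<mapsto> p z mod p^n\<close>, and such a
  preimage lies in \<open>Z\<close> unless \<open>g(z / p^n) = 0\<close>.  As \<open>g(z / p^n)\<close> is a polynomial of degree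
  \<open>deg m\<^sub>0\<close> in a \<open>p^n\<close>-th root of unity that depends injectively on \<open>z\<close>, this gives
  \<open>p |Z| \<le> |Z| + deg m\<^sub>0\<close>.  Finally \<open>n \<mapsto> n p^t\<close> embeds the integers counted in the
  theorem into \<open>Z\<close>.\<close>

section \<open>Digits of natural numbers\<close>

definition nat_digit :: "nat \<Rightarrow> nat \<Rightarrow> nat \<Rightarrow> nat" where
  "nat_digit p a i = a div p ^ i mod p"

lemma sum_nat_digits: "(\<Sum>i<m. nat_digit p a i * p ^ i) = a mod p ^ m"
proof (induction m)
  case 0
  then show ?case by simp
next
  case (Suc m)
  have "a mod p ^ Suc m = p ^ m * nat_digit p a m + a mod p ^ m"
    unfolding nat_digit_def by (metis mod_mult2_eq power_Suc2)
  then show ?case using Suc by simp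
qed

lemma mod_power_Suc_div_power: "a mod p ^ Suc i div p ^ i = nat_digit p a i"
proof (cases "p = 0")
  case True
  then show ?thesis by (cases i) (auto simp: nat_digit_def)
next
  case False
  have "a mod p ^ Suc i = p ^ i * nat_digit p a i + a mod p ^ i"
    unfolding nat_digit_def by (metis mod_mult2_eq power_Suc2)
  moreover have "a mod p ^ i < p ^ i" using False by simp
  ultimately show ?thesis using False by simp
qed

lemma nat_digit_nonzero_exists:
  assumes "p \<ge> 2" and "a > 0"
  shows "\<exists>i. nat_digit p a i \<noteq> 0"
proof (rule ccontr)
  assume "\<nexists>i. nat_digit p a i \<noteq> 0"
  then have "a mod p ^ a = 0" using sum_nat_digits[of p a a] by simp
  moreover have "a < p ^ a"
    using less_exp[of a] power_mono[of 2 p a] assms(1) by linarith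
  ultimately show False using assms(2) by simp
qed

section \<open>The p-adic numbers \<open>a / p\<^sup>e\<close>\<close>

definition padic_quot :: "nat \<Rightarrow> nat \<Rightarrow> int \<Rightarrow> (int \<Rightarrow> nat)" where
  "padic_quot p a e = padic_pshift (- e) (padic_of_nat p a)"

lemma padic_quot_digit:
  "padic_quot p a e j = (if j + e < 0 then 0 else nat_digit p a (nat (j + e)))"
  by (simp add: padic_quot_def padic_pshift_def padic_of_nat_def nat_digit_def)

lemma padic_quot_in_Qp: "p > 0 \<Longrightarrow> padic_quot p a e \<in> Qp p"
  unfolding Qp_def by (auto simp: padic_quot_digit nat_digit_def intro!: exI[of _ "-e"])

lemma padic_pshift_quot: "padic_pshift s (padic_quot p a e) = padic_quot p a (e - s)"
  by (simp add: padic_quot_def padic_pshift_def algebra_simps)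

lemma padic_quot_zero: "padic_quot p 0 0 = (\<lambda>_. 0)"
  by (auto simp: padic_quot_digit nat_digit_def)

lemma nat_digit_mult_power:
  assumes "p > 0"
  shows "nat_digit p (a * p ^ t) i = (if i < t then 0 else nat_digit p a (i - t))"
proof (cases "i < t")
  case True
  then have "p ^ t = p ^ (t - Suc i + Suc i)"
    by simp
  then have "p ^ t = p ^ (t - Suc i) * p ^ Suc i"
    by (simp only: power_add)
  then have "a * p ^ t = a * p ^ (t - Suc i) * p * p ^ i"
    by (simp add: ac_simps)
  then have "a * p ^ t div p ^ i = a * p ^ (t - Suc i) * p"
    using assms by (simp only:) simp
  then show ?thesis using True by (simp add: nat_digit_def)
next
  case False
  then have "p ^ i = p ^ t * p ^ (i - t)"
    by (simp flip: power_add)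
  then have "a * p ^ t div p ^ i = a div p ^ (i - t)"
    using assms by (simp add: div_mult2_eq)
  then show ?thesis using False by (simp add: nat_digit_def)
qed

lemma padic_quot_mult_power:
  assumes "p > 0"
  shows "padic_quot p (a * p ^ t) (e + int t) = padic_quot p a e"
proof
  fix j
  have "nat (j + (e + int t)) = nat (j + e) + t" if "j + e \<ge> 0"
    using that by arith
  then show "padic_quot p (a * p ^ t) (e + int t) j = padic_quot p a e j"
    using assms by (auto simp: padic_quot_digit nat_digit_mult_power)
qed

lemma powi_diff_of_nat:
  fixes x :: real
  assumes "x \<noteq> 0"
  shows "x powi (int i - e) = x ^ i * x powi (- e)"
  using power_int_add[of x "int i" "- e"] assms by (simp add: power_int_of_nat)

lemma padic_trunc_quot:
  assumes "p > 0"
  shows "padic_trunc p (padic_quot p a e) n = real (a mod p ^ nat (n + e)) * real p powi (- e)"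
proof -
  let ?d = "padic_quot p a e"
  define m where "m = nat (n + e)"
  have support: "{j. j < n \<and> ?d j \<noteq> 0} = (\<lambda>i. int i - e) ` {i. i < m \<and> nat_digit p a i \<noteq> 0}"
  proof (intro set_eqI iffI)
    fix j assume "j \<in> {j. j < n \<and> ?d j \<noteq> 0}"
    then show "j \<in> (\<lambda>i. int i - e) ` {i. i < m \<and> nat_digit p a i \<noteq> 0}"
      unfolding m_def by (intro image_eqI[of _ _ "nat (j + e)"]) (auto simp: padic_quot_digit split: if_splits)
  qed (auto simp: m_def padic_quot_digit)
  have "padic_trunc p ?d n
      = (\<Sum>i\<in>{i. i < m \<and> nat_digit p a i \<noteq> 0}. real (nat_digit p a i) * real p powi (int i - e))"
    unfolding padic_trunc_def support by (subst sum.reindex) (auto simp: inj_on_def padic_quot_digit)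
  also have "\<dots> = (\<Sum>i<m. real (nat_digit p a i) * real p powi (int i - e))"
    by (rule sum.mono_neutral_left) auto
  also have "\<dots> = real (\<Sum>i<m. nat_digit p a i * p ^ i) * real p powi (- e)"
    using assms by (simp add: sum_distrib_right powi_diff_of_nat mult.assoc)
  finally show ?thesis by (simp only: sum_nat_digits m_def)
qed

lemma rmod_scale:
  assumes "x > 0"
  shows "rmod (u * x) (v * x) = rmod u v * x"
  using assms by (simp add: rmod_def algebra_simps)

lemma rmod_of_nat: "rmod (real w) (real q) = real (w mod q)"
proof -
  have "real w = real q * real (w div q) + real (w mod q)"
    by (metis div_mult_mod_eq of_nat_add of_nat_mult mult.commute)
  then show ?thesis
    unfolding rmod_def floor_divide_of_nat_eq of_int_of_nat_eq by linarith
qed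

lemma padic_smult_quot:
  assumes "p > 0"
  shows "padic_smult p k (padic_quot p a e) = padic_quot p (k * a) e"
proof
  fix j
  let ?x = "real p powi (- e)"
  have x: "?x > 0" using assms by simp
  show "padic_smult p k (padic_quot p a e) j = padic_quot p (k * a) e j"
  proof (cases "j + e < 0")
    case True
    then have "nat (j + 1 + e) = 0" by simp
    then show ?thesis using True assms
      by (simp add: padic_smult_def padic_trunc_quot rmod_def padic_quot_digit)
  next
    case False
    define i where "i = nat (j + e)"
    have j: "j = int i - e" and j1: "j + 1 = int (Suc i) - e" and i1: "nat (j + 1 + e) = Suc i"
      using False by (simp_all add: i_def)
    have trunc: "padic_trunc p (padic_quot p a e) (j + 1) = real (a mod p ^ Suc i) * ?x"
      using padic_trunc_quot[OF assms] i1 by simp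
    have powi_j1: "real p powi (j + 1) = real (p ^ Suc i) * ?x"
      using powi_diff_of_nat[of "real p" "Suc i" e] assms by (simp only: j1) simp
    have powi_j: "real p powi j = real (p ^ i) * ?x"
      using powi_diff_of_nat[of "real p" i e] assms by (simp add: j)
    have "real k * (real (a mod p ^ Suc i) * ?x) = real (k * (a mod p ^ Suc i)) * ?x"
      by simp
    then have "rmod (real k * padic_trunc p (padic_quot p a e) (j + 1)) (real p powi (j + 1))
        = real (k * a mod p ^ Suc i) * ?x"
      unfolding trunc powi_j1 by (simp only: rmod_scale[OF x] rmod_of_nat mod_mult_right_eq)
    then have "padic_smult p k (padic_quot p a e) j
        = nat \<lfloor>real (k * a mod p ^ Suc i) * ?x / (real (p ^ i) * ?x)\<rfloor>"
      unfolding padic_smult_def by (simp only: powi_j)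
    also have "real (k * a mod p ^ Suc i) * ?x / (real (p ^ i) * ?x)
        = real (k * a mod p ^ Suc i) / real (p ^ i)"
      using x assms by simp
    also have "nat \<lfloor>real (k * a mod p ^ Suc i) / real (p ^ i)\<rfloor> = k * a mod p ^ Suc i div p ^ i"
      by (simp only: floor_divide_of_nat_eq nat_int)
    also have "\<dots> = nat_digit p (k * a) i"
      by (rule mod_power_Suc_div_power)
    moreover have "padic_quot p (k * a) e j = nat_digit p (k * a) i"
      using False by (simp add: padic_quot_digit i_def)
    ultimately show ?thesis by (simp only:)
  qed
qed

lemma padic_val_eqI:
  assumes "d v \<noteq> 0" and "\<And>j. j < v \<Longrightarrow> d j = 0"
  shows "padic_val d = v"
  unfolding padic_val_def
proof (rule the_equality)
  fix w assume w: "d w \<noteq> 0 \<and> (\<forall>j<w. d j = 0)"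
  then show "w = v" using assms by (metis linorder_neqE)
qed (use assms in blast)

lemma padic_norm_quot_le_imp_dvd:
  assumes "p \<ge> 2" and "a > 0"
    and norm: "padic_norm p (padic_quot p a e) \<le> real p powi M" and "int t \<le> e - M"
  shows "p ^ t dvd a"
proof -
  define v where "v = (LEAST i. nat_digit p a i \<noteq> 0)"
  have "nat_digit p a v \<noteq> 0"
    unfolding v_def using nat_digit_nonzero_exists[OF assms(1,2)] by (rule LeastI_ex)
  have below: "nat_digit p a i = 0" if "i < v" for i
    using that not_less_Least unfolding v_def by blast
  have lowest: "padic_quot p a e (int v - e) \<noteq> 0"
    using \<open>nat_digit p a v \<noteq> 0\<close> by (simp add: padic_quot_digit)
  have "padic_val (padic_quot p a e) = int v - e"
  proof (rule padic_val_eqI)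
    show "padic_quot p a e (int v - e) \<noteq> 0" by (fact lowest)
  next
    fix j assume "j < int v - e"
    then show "padic_quot p a e j = 0" using below by (simp add: padic_quot_digit nat_less_iff)
  qed
  then have "padic_norm p (padic_quot p a e) = real p powi (e - int v)"
    using lowest by (auto simp: padic_norm_def)
  then have "real p powi (e - int v) \<le> real p powi M"
    using norm by simp
  then have "e - int v \<le> M"
    using power_int_strict_increasing[of M "e - int v" "real p"] assms(1) by force
  then have "a mod p ^ t = (\<Sum>i<t. nat_digit p a i * p ^ i)"
    using \<open>int t \<le> e - M\<close> by (simp add: sum_nat_digits)
  also have "\<dots> = 0"
    using below \<open>e - int v \<le> M\<close> \<open>int t \<le> e - M\<close> by simp
  finally show ?thesis by (simp add: mod_eq_0_iff_dvd)
qed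

definition e2pi :: "real \<Rightarrow> complex" where
  "e2pi t = exp (2 * pi * \<i> * complex_of_real t)"

lemma e2pi_add_int: "e2pi (x + of_int m) = e2pi x"
proof -
  have "2 * pi * \<i> * complex_of_real (x + of_int m) = 2 * pi * \<i> * complex_of_real x + 2 * of_int m * pi * \<i>"
    by (simp add: algebra_simps)
  then have "e2pi (x + of_int m) = e2pi x * exp (2 * of_int m * pi * \<i>)"
    unfolding e2pi_def by (simp only: exp_add)
  also have "exp (2 * of_int m * pi * \<i>) = 1"
    by (rule exp_integer_2pi) simp
  finally show ?thesis by simp
qed

lemma e2pi_eq_imp_int_diff:
  assumes "e2pi x = e2pi y"
  obtains m :: int where "x = y + of_int m"
proof -
  obtain m :: int where "2 * pi * \<i> * complex_of_real x = 2 * pi * \<i> * complex_of_real y + of_int (2 * m) * pi * \<i>"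
    using assms unfolding e2pi_def exp_eq by blast
  then have "(2 * pi * \<i>) * complex_of_real (x - (y + of_int m)) = 0"
    by (simp add: algebra_simps)
  then have "complex_of_real x = complex_of_real (y + of_int m)"
    by simp
  then show thesis by (intro that) (simp only: of_real_eq_iff)
qed

lemma padic_chi_quot:
  assumes "p > 0"
  shows "padic_chi p (padic_quot p a e) = e2pi (real a * real p powi (- e))"
proof -
  have frac: "padic_frac p (padic_quot p a e) = real (a mod p ^ nat e) * real p powi (- e)"
    unfolding padic_frac_def padic_trunc_quot[OF assms] by simp
  define m where "m = a div p ^ nat e * p ^ nat (int (nat e) - e)"
  have "real a - real (a mod p ^ nat e) = real (p ^ nat e) * real (a div p ^ nat e)"
    by (metis add_diff_cancel_right' div_mult_mod_eq mult.commute of_nat_add of_nat_mult)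
  moreover have "real (p ^ nat e) * real p powi (- e) = real p powi (int (nat e) - e)"
    using powi_diff_of_nat[of "real p" "nat e" e] assms by simp
  moreover have "real p powi (int (nat e) - e) = real (p ^ nat (int (nat e) - e))"
    by (simp add: power_int_def)
  ultimately have "real a * real p powi (- e) = padic_frac p (padic_quot p a e) + of_int (int m)"
    unfolding frac m_def by (simp add: algebra_simps)
  then have "e2pi (real a * real p powi (- e)) = e2pi (padic_frac p (padic_quot p a e))"
    using e2pi_add_int[of _ "int m"] by simp
  then show ?thesis unfolding padic_chi_def e2pi_def by simp
qed

section \<open>Trigonometric polynomials at \<open>a / p\<^sup>e\<close>\<close>

definition trig_poly_real :: "nat \<Rightarrow> (nat \<Rightarrow> complex) \<Rightarrow> real \<Rightarrow> complex" where
  "trig_poly_real K c y = (\<Sum>k\<le>K. c k * e2pi (real k * y))"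

lemma trig_poly_quot:
  assumes "p > 0"
  shows "trig_poly p K c (padic_quot p a e) = trig_poly_real K c (real a * real p powi (- e))"
  unfolding trig_poly_def trig_poly_real_def padic_smult_quot[OF assms] padic_chi_quot[OF assms]
  by (simp add: mult.assoc)

lemma trig_poly_zero: "p > 0 \<Longrightarrow> trig_poly p K c (\<lambda>_. 0) = trig_poly_real K c 0"
  using trig_poly_quot[of p K c 0 0] by (simp add: padic_quot_zero)

lemma trig_poly_real_add_int: "trig_poly_real K c (y + of_int m) = trig_poly_real K c y"
  unfolding trig_poly_real_def
proof (intro sum.cong refl)
  fix k
  have "real k * (y + of_int m) = real k * y + of_int (int k * m)"
    by (simp add: algebra_simps)
  then show "c k * e2pi (real k * (y + of_int m)) = c k * e2pi (real k * y)"
    by (simp only: e2pi_add_int)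
qed

lemma trig_poly_real_of_int: "trig_poly_real K c (of_int m) = trig_poly_real K c 0"
  using trig_poly_real_add_int[of K c 0 m] by simp

lemma trig_deg_ge: "k \<le> K \<Longrightarrow> c k \<noteq> 0 \<Longrightarrow> k \<le> trig_deg K c"
  unfolding trig_deg_def by (intro Max_ge) auto

lemma card_trig_poly_real_roots:
  assumes "n > 0" and "trig_poly_real K c 0 \<noteq> 0"
  shows "card {z. z < n \<and> trig_poly_real K c (real z / real n) = 0} \<le> trig_deg K c"
proof -
  define Q where "Q = (\<Sum>k\<le>K. monom (c k) k)"
  define \<zeta> where "\<zeta> z = e2pi (real z / real n)" for z :: nat
  have poly_Q: "trig_poly_real K c (real z / real n) = poly Q (\<zeta> z)" for z
    unfolding trig_poly_real_def Q_def poly_sum poly_monom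
  proof (intro sum.cong refl)
    fix k
    have "2 * pi * \<i> * complex_of_real (real k * (real z / real n))
        = of_nat k * (2 * pi * \<i> * complex_of_real (real z / real n))"
      by simp
    then show "c k * e2pi (real k * (real z / real n)) = c k * \<zeta> z ^ k"
      unfolding \<zeta>_def e2pi_def by (simp only: exp_of_nat_mult)
  qed
  have "Q \<noteq> 0"
    using assms(2) poly_Q[of 0] by auto
  have "degree Q \<le> trig_deg K c"
  proof (rule degree_le, intro allI impI)
    fix i assume "trig_deg K c < i"
    then show "coeff Q i = 0"
      using trig_deg_ge[of i K c] by (auto simp: Q_def coeff_sum sum.delta)
  qed
  have inj: "inj_on \<zeta> {..<n}"
  proof (rule inj_onI)
    fix x y assume "x \<in> {..<n}" "y \<in> {..<n}" "\<zeta> x = \<zeta> y"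
    then obtain m :: int where "real x / real n = real y / real n + of_int m"
      unfolding \<zeta>_def by (auto elim: e2pi_eq_imp_int_diff)
    then have "real_of_int (int x) = real_of_int (int y + m * int n)"
      using assms(1) by (simp add: field_simps)
    then have "int x = int y + m * int n"
      by (simp only: of_int_eq_iff)
    then have "int x mod int n = int y mod int n"
      by simp
    then show "x = y"
      using \<open>x \<in> {..<n}\<close> \<open>y \<in> {..<n}\<close> by simp
  qed
  have "card {z. z < n \<and> trig_poly_real K c (real z / real n) = 0}
      = card (\<zeta> ` {z. z < n \<and> trig_poly_real K c (real z / real n) = 0})"
    by (rule card_image[symmetric], rule inj_on_subset[OF inj]) auto
  also have "\<dots> \<le> card {x. poly Q x = 0}"
    using \<open>Q \<noteq> 0\<close> poly_roots_finite by (intro card_mono) (auto simp: poly_Q)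
  also have "\<dots> \<le> degree Q"
    using \<open>Q \<noteq> 0\<close> by (rule card_poly_roots_bound)
  finally show ?thesis using \<open>degree Q \<le> trig_deg K c\<close> by simp
qed

lemma phi_hat_quot:
  assumes "p > 0" and "trig_poly_real K c 0 = 1" and "int n \<ge> N + e"
  shows "phi_hat p K c C N (padic_quot p a e)
      = complex_of_real C * (\<Prod>j<n. trig_poly_real K c (real a * real p powi (int j - N - e)))"
proof -
  define f where "f j = trig_poly_real K c (real a * real p powi (int j - N - e))" for j
  have factor: "trig_poly p K c (padic_pshift (int j - N) (padic_quot p a e)) = f j" for j
    unfolding padic_pshift_quot trig_poly_quot[OF assms(1)] f_def by (simp add: algebra_simps)
  have "f j = 1" if "j \<notin> {..<n}" for j
  proof -
    have "real a * real p powi (int j - N - e) = of_int (int (a * p ^ nat (int j - N - e)))"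
      using that assms(3) by (simp add: power_int_def)
    then show ?thesis unfolding f_def using trig_poly_real_of_int assms(2) by metis
  qed
  then have "f has_prod (\<Prod>j<n. f j)"
    by (intro has_prod_finite) auto
  then have "(\<Prod>j. f j) = (\<Prod>j<n. f j)"
    by (metis has_prod_unique)
  then show ?thesis
    unfolding phi_hat_def factor by (simp add: f_def)
qed

definition refine_prod :: "nat \<Rightarrow> nat \<Rightarrow> (nat \<Rightarrow> complex) \<Rightarrow> nat \<Rightarrow> nat \<Rightarrow> complex" where
  "refine_prod p K c n a = (\<Prod>j<n. trig_poly_real K c (real a * real p powi (int j - int n)))"

lemma phi_hat_quot_eq_refine_prod:
  assumes "p > 0" and "trig_poly_real K c 0 = 1"
  shows "phi_hat p K c C N (padic_quot p a (int n - N)) = complex_of_real C * refine_prod p K c n a"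
  using phi_hat_quot[OF assms, where n = n and N = N and e = "int n - N"]
  by (simp add: refine_prod_def)

lemma refine_prod_rec:
  assumes "p > 0" and "trig_poly_real K c 0 = 1" and "n > 0"
  shows "refine_prod p K c n a
      = trig_poly_real K c (real a / real (p ^ n)) * refine_prod p K c n (p * a mod p ^ n)"
proof -
  define f where "f j = trig_poly_real K c (real a * real p powi (int j - int n))" for j
  obtain n' where n: "n = Suc n'" using assms(3) by (cases n) auto
  have "refine_prod p K c n (p * a mod p ^ n) = (\<Prod>j<n. f (Suc j))"
    unfolding refine_prod_def
  proof (rule prod.cong[OF refl])
    fix j assume "j \<in> {..<n}"
    define q where "q = p * a div p ^ n"
    have r: "real (p * a mod p ^ n) = real p * real a - real (p ^ n) * real q"
      unfolding q_def by (metis add_diff_cancel_left' div_mult_mod_eq mult.commute of_nat_add of_nat_mult)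
    have y: "real p powi (int j - int n) = real p ^ j / real p ^ n"
      using assms(1) by (simp add: power_int_diff power_int_of_nat)
    have y1: "real p powi (int (Suc j) - int n) = real p ^ Suc j / real p ^ n"
      using assms(1) by (simp add: power_int_diff power_int_of_nat del: of_nat_Suc)
    have "real (p * a mod p ^ n) * real p powi (int j - int n)
        = real a * real p powi (int (Suc j) - int n) + of_int (- int (q * p ^ j))"
      unfolding r y y1 using assms(1) by (simp add: field_simps)
    then show "trig_poly_real K c (real (p * a mod p ^ n) * real p powi (int j - int n)) = f (Suc j)"
      unfolding f_def by (simp only: trig_poly_real_add_int)
  qed
  also have "\<dots> = (\<Prod>j<n'. f (Suc j))"
    using trig_poly_real_of_int[of K c "int a"] assms(2) by (simp add: n f_def)
  finally have shifted: "refine_prod p K c n (p * a mod p ^ n) = (\<Prod>j<n'. f (Suc j))" .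
  have "refine_prod p K c n a = (\<Prod>j<Suc n'. f j)"
    unfolding refine_prod_def f_def n by (rule refl)
  also have "\<dots> = f 0 * refine_prod p K c n (p * a mod p ^ n)"
    unfolding shifted by (rule prod.lessThan_Suc_shift)
  finally have "refine_prod p K c n a = f 0 * refine_prod p K c n (p * a mod p ^ n)" .
  moreover have "f 0 = trig_poly_real K c (real a / real (p ^ n))"
    using assms(1) by (simp add: f_def power_int_minus power_int_of_nat field_simps)
  ultimately show ?thesis by simp
qed

section \<open>Counting the support\<close>

lemma card_preimages_mult_mod:
  assumes "p > 0" and "n > 0" and A: "A \<subseteq> {..<p ^ n}" and dvd: "\<And>a. a \<in> A \<Longrightarrow> p dvd a"
  shows "card A * p \<le> card {z. z < p ^ n \<and> p * z mod p ^ n \<in> A}"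
proof -
  obtain n' where n: "n = Suc n'" using assms(2) by (cases n) auto
  define f where "f = (\<lambda>(y, t). y div p + t * p ^ n')"
  have small: "y div p < p ^ n'" if "y \<in> A" for y
    using A that by (auto simp: n less_mult_imp_div_less mult.commute)
  have f_into: "f (y, t) \<in> {z. z < p ^ n \<and> p * z mod p ^ n \<in> A}" if "y \<in> A" "t < p" for y t
  proof -
    have "f (y, t) < p ^ n' + t * p ^ n'" using small[OF that(1)] by (simp add: f_def)
    also have "\<dots> \<le> p ^ n" using that(2) mult_right_mono[of "Suc t" p "p ^ n'"] by (simp add: n)
    finally have "f (y, t) < p ^ n" .
    moreover have "p * f (y, t) = y + t * p ^ n"
      using dvd[OF that(1)] by (simp add: f_def n algebra_simps)
    ultimately show ?thesis using that(1) A by auto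
  qed
  have decode: "f (y, t) mod p ^ n' = y div p \<and> f (y, t) div p ^ n' = t" if "y \<in> A" for y t
    using small[OF that] assms(1) by (simp add: f_def)
  have "inj_on f (A \<times> {..<p})"
  proof (rule inj_onI, clarify)
    fix y t y' t' assume "y \<in> A" "y' \<in> A" "f (y, t) = f (y', t')"
    then have "y div p = y' div p" "t = t'"
      using decode[of y t] decode[of y' t'] by metis+
    then show "y = y' \<and> t = t'"
      using dvd[OF \<open>y \<in> A\<close>] dvd[OF \<open>y' \<in> A\<close>] by (metis dvd_div_mult_self)
  qed
  then have "card (A \<times> {..<p}) \<le> card {z. z < p ^ n \<and> p * z mod p ^ n \<in> A}"
    using f_into by (intro card_inj_on_le) auto
  then show ?thesis by (simp add: card_cartesian_product)
qed

lemma card_refine_prod_support: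
  assumes "p > 0" and "trig_poly_real K c 0 = 1" and "n > 0"
    and dvd: "\<And>a. a < p ^ n \<Longrightarrow> refine_prod p K c n a \<noteq> 0 \<Longrightarrow> p dvd a"
  shows "(p - 1) * card {a. a < p ^ n \<and> refine_prod p K c n a \<noteq> 0} \<le> trig_deg K c"
proof -
  define Z where "Z = {a. a < p ^ n \<and> refine_prod p K c n a \<noteq> 0}"
  define Pre where "Pre = {z. z < p ^ n \<and> p * z mod p ^ n \<in> Z}"
  define Roots where "Roots = {z. z < p ^ n \<and> trig_poly_real K c (real z / real (p ^ n)) = 0}"
  have rec: "refine_prod p K c n z \<noteq> 0 \<longleftrightarrow>
      trig_poly_real K c (real z / real (p ^ n)) \<noteq> 0 \<and> refine_prod p K c n (p * z mod p ^ n) \<noteq> 0" for z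
    using refine_prod_rec[OF assms(1-3), of z] by simp
  have "Z \<subseteq> Pre"
  proof
    fix z assume "z \<in> Z"
    then show "z \<in> Pre" using rec[of z] assms(1) by (simp add: Z_def Pre_def)
  qed
  moreover have "Pre - Z \<subseteq> Roots"
  proof
    fix z assume "z \<in> Pre - Z"
    then show "z \<in> Roots" using rec[of z] by (auto simp: Z_def Pre_def Roots_def)
  qed
  ultimately have "card Pre \<le> card (Z \<union> Roots)"
    by (intro card_mono) (auto simp: Z_def Roots_def)
  also have "\<dots> \<le> card Z + card Roots"
    by (rule card_Un_le)
  finally have "card Pre \<le> card Z + card Roots" .
  moreover have "card Z * p \<le> card Pre"
    unfolding Pre_def using assms(1,3) dvd by (intro card_preimages_mult_mod) (auto simp: Z_def)
  moreover have "card Roots \<le> trig_deg K c"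
    unfolding Roots_def using assms(1,2) by (intro card_trig_poly_real_roots) auto
  ultimately show ?thesis
    unfolding Z_def[symmetric] by (simp add: algebra_simps diff_mult_distrib2)
qed

lemma card_phi_hat_grid_le:
  assumes "p > 0" and "trig_poly_real K c 0 = 1" and "M + N \<le> int L"
  shows "card {n. real n < real p powi (M + N) \<and> phi_hat p K c C N (padic_quot p n M) \<noteq> 0}
      \<le> card {a. a < p ^ L \<and> refine_prod p K c L a \<noteq> 0}"
proof -
  define t where "t = nat (int L - M - N)"
  have t: "int L - N = M + int t" "int L = M + N + int t"
    using assms(3) by (simp_all add: t_def)
  have "n * p ^ t \<in> {a. a < p ^ L \<and> refine_prod p K c L a \<noteq> 0}"
    if n: "real n < real p powi (M + N)" "phi_hat p K c C N (padic_quot p n M) \<noteq> 0" for n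
  proof -
    have "real (n * p ^ t) < real p powi (M + N) * real p ^ t"
      using n(1) assms(1) by simp
    also have "\<dots> = real (p ^ L)"
      using assms(1) by (simp add: t(2) power_int_add flip: power_int_of_nat)
    finally have "n * p ^ t < p ^ L"
      by (simp only: of_nat_less_iff)
    moreover have "phi_hat p K c C N (padic_quot p n M) = complex_of_real C * refine_prod p K c L (n * p ^ t)"
      using phi_hat_quot_eq_refine_prod[OF assms(1,2), of C N "n * p ^ t" L] assms(1)
      by (simp add: t(1) padic_quot_mult_power)
    ultimately show ?thesis using n(2) by simp
  qed
  moreover have "inj_on (\<lambda>n. n * p ^ t) X" for X
    using assms(1) by (simp add: inj_on_def)
  ultimately show ?thesis
    by (intro card_inj_on_le[where f = "\<lambda>n. n * p ^ t"]) auto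
qed

lemma refine_prod_nonzero_imp_dvd:
  assumes "p \<ge> 2" and "trig_poly_real K c 0 = 1" and "C \<noteq> 0"
    and support: "\<forall>xi\<in>Qp p. phi_hat p K c C N xi \<noteq> 0 \<longrightarrow> padic_norm p xi \<le> real p powi M"
    and "M + N < int L" and "refine_prod p K c L a \<noteq> 0"
  shows "p dvd a"
proof (cases "a = 0")
  case False
  have "phi_hat p K c C N (padic_quot p a (int L - N)) \<noteq> 0"
    using phi_hat_quot_eq_refine_prod[of p K c C N a L] assms(1,2,3,6) by simp
  moreover have "padic_quot p a (int L - N) \<in> Qp p"
    using assms(1) by (simp add: padic_quot_in_Qp)
  ultimately have "padic_norm p (padic_quot p a (int L - N)) \<le> real p powi M"
    using support by blast
  then have "p ^ 1 dvd a"
    using assms(1,5) False by (intro padic_norm_quot_le_imp_dvd) auto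
  then show ?thesis by simp
qed simp

theorem lemma1:
  fixes p K :: nat and c :: "nat \<Rightarrow> complex" and C :: real and M N :: int
  assumes "prime p"
    and "trig_poly p K c (\<lambda>_. 0) = 1"
    and "\<forall>xi\<in>Qp p. phi_hat p K c C N xi \<noteq> 0 \<longrightarrow> padic_norm p xi \<le> real p powi M"
  shows "real (card {n::nat. real n < real p powi (M + N) \<and>
            phi_hat p K c C N (padic_pshift (- M) (padic_of_nat p n)) \<noteq> 0})
         \<le> real (trig_deg K c) / (real p - 1)"
proof -
  have p: "p \<ge> 2" using assms(1) by (simp add: prime_ge_2_nat)
  have g0: "trig_poly_real K c 0 = 1" using assms(2) trig_poly_zero p by simp
  define S where "S = {n. real n < real p powi (M + N) \<and> phi_hat p K c C N (padic_quot p n M) \<noteq> 0}"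
  define L where "L = Suc (nat (M + N))"
  have L: "M + N < int L" by (simp add: L_def)
  have "(p - 1) * card S \<le> trig_deg K c"
  proof (cases "C = 0")
    case True
    then show ?thesis by (simp add: S_def phi_hat_def)
  next
    case False
    have "card S \<le> card {a. a < p ^ L \<and> refine_prod p K c L a \<noteq> 0}"
      unfolding S_def using p g0 L by (intro card_phi_hat_grid_le) auto
    also have "(p - 1) * \<dots> \<le> trig_deg K c"
      using p g0 L False assms(3) refine_prod_nonzero_imp_dvd[of p K c C N M L]
      by (intro card_refine_prod_support) (auto simp: L_def)
    finally show ?thesis by simp
  qed
  then have "real (p - 1) * real (card S) \<le> real (trig_deg K c)"
    by (simp only: of_nat_le_iff flip: of_nat_mult)
  then show ?thesis
    using p by (simp add: S_def padic_quot_def pos_le_divide_eq of_nat_diff mult.commute)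
qed

end
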